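(* Let $\mu\in\mathbb{C}$ with $\mu\neq-1,-2,-3,\ldots$ and let $\ell\in\mathbb{N}_0$. Then for every $j\in\mathbb{N}_0$: (1) $M_j^{\mu,\ell}(x)$ is a polynomial in $x$ of degree $j+\ell$; (2) (top term) $M_j^{\mu,\ell}(x)=\frac{(-1)^j}{j!}x^{j+\ell}+(\text{terms of degree}<j+\ell)$; (3) (constant term) $$M_j^{\mu,\ell}(0)=\frac{2^{2\ell-\mu}\Gamma(\ell+\frac12)\Gamma(j+\mu+1)\left(\frac{\mu+1}{2}-\ell\right)_j}{j!\,\Gamma(\frac{\mu+2}{2})\,\Gamma(j+\frac{\mu+1}{2})},$$ where $(a)_n=a(a+1)\cdots(a+n-1)$ is the Pochhammer symbol.
   Context: Let $I_\alpha$, $K_\alpha$ be the modified Bessel functions and set $\widetilde I_\alpha(z)=(z/2)^{-\alpha}I_\alpha(z)$, $\widetilde K_\alpha(z)=(z/2)^{-\alpha}K_\alpha(z)$. For $\mu\in\mathbb{C}$, $\ell\in\mathbb{N}_0$, $x>0$ and $t$ near $0$ define $$G^{\mu,\ell}(t,x)=\frac{1}{(1-t)^{\ell+\frac{\mu+3}{2}}}\left(\frac x2\right)^{2\ell+1}e^{\frac x2}\,\widetilde I_{\frac\mu2}\!\left(\frac{tx}{2(1-t)}\right)\widetilde K_{\ell+\frac12}\!\left(\frac{x}{2(1-t)}\right),$$ and for $j\in\mathbb{N}_0$ $$M_j^{\mu,\ell}(x)=\frac{\Gamma(j+\mu+1)}{j!\,2^\mu\,\Gamma(j+\frac{\mu+1}{2})}\left.\frac{\partial^j}{\partial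 t^j}\right|_{t=0}G^{\mu,\ell}(t,x).$$ *)

theory Defs
  imports "HOL-Analysis.Analysis" "HOL-Computational_Algebra.Polynomial"
begin

text \<open>Normalised modified Bessel function of the first kind (entire in z):
  tilde I_a(z) = (z/2)^(-a) I_a(z) = sum_k (z/2)^(2k) / (k! Gamma(k+a+1)),
  written with the reciprocal Gamma function so that it is defined for all a.\<close>
definition BesselI_tilde :: "complex \<Rightarrow> complex \<Rightarrow> complex" where
  "BesselI_tilde a z = (\<Sum>k. (z/2)^(2*k) * rGamma (of_nat k + a + 1) / fact k)"

definition BesselI :: "complex \<Rightarrow> complex \<Rightarrow> complex" where
  "BesselI a z = (z/2) powr a * BesselI_tilde a z"

definition BesselK_aux :: "complex \<Rightarrow> complex \<Rightarrow> complex" where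
  "BesselK_aux a z = (of_real pi / 2) * (BesselI (-a) z - BesselI a z) / sin (a * of_real pi)"

definition BesselK :: "complex \<Rightarrow> complex \<Rightarrow> complex" where
  "BesselK a z = (if a \<in> \<int> then Lim (at a) (\<lambda>b. BesselK_aux b z) else BesselK_aux a z)"

definition BesselK_tilde :: "complex \<Rightarrow> complex \<Rightarrow> complex" where
  "BesselK_tilde a z = (z/2) powr (-a) * BesselK a z"

definition G_gen :: "complex \<Rightarrow> nat \<Rightarrow> complex \<Rightarrow> real \<Rightarrow> complex" where
  "G_gen \<mu> l t x =
     (1 - t) powr (-(of_nat l + (\<mu> + 3)/2))
     * of_real ((x/2)^(2*l+1) * exp (x/2))
     * BesselI_tilde (\<mu>/2) (t * of_real x / (2*(1 - t)))
     * BesselK_tilde (of_nat l + 1/2) (of_real x / (2*(1 - t)))"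

definition M_poly :: "complex \<Rightarrow> nat \<Rightarrow> nat \<Rightarrow> real \<Rightarrow> complex" where
  "M_poly \<mu> l j x =
     Gamma (of_nat j + \<mu> + 1) / (fact j * 2 powr \<mu> * Gamma (of_nat j + (\<mu> + 1)/2))
     * (deriv ^^ j) (\<lambda>t. G_gen \<mu> l t x) 0"

end

theory Submission
  imports Defs "HOL-Complex_Analysis.Complex_Analysis"
begin

text \<open>Put \<open>v = x t / (2(1-t))\<close>. Bessel \<open>K\<close> of half-integer order is elementary:
  \<open>Ktilde_{l+1/2}(z) = 2^l sqrt(pi) z^(-l-1) e^(-z) y_l(1/z)\<close> with the Bessel polynomial \<open>y_l\<close>,
  which follows from the three-term recurrence of \<open>Itilde\<close> and the closed forms of
  \<open>Itilde_{-1/2}\<close> and \<open>Itilde_{1/2}\<close> (cosh and sinh). Hence the generating function is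
  \<open>(1-t)^(-(mu+1)/2) e^(-v) Itilde_{mu/2}(v)\<close> times a polynomial in \<open>x\<close> and \<open>1-t\<close>.
  The Taylor coefficients of \<open>e^(-v) Itilde_nu(v)\<close> obey a first-order recurrence, derived from
  Bessel's equation, and are explicit by Legendre's duplication formula. So the \<open>j\<close>-th Taylor
  coefficient in \<open>t\<close> is a finite sum of monomials in \<open>x\<close>: the top one comes only from the
  \<open>j\<close>-th coefficient of \<open>e^(-v) Itilde_{mu/2}(v)\<close>, the constant one only from the binomial
  series of \<open>(1-t)^(l-(mu+1)/2)\<close>.\<close>

section \<open>The normalised Bessel function of the first kind\<close>

lemma summable_BesselI_tilde_series:
  fixes a z :: complex
  shows "summable (\<lambda>k. (z/2)^(2*k) * rGamma (of_nat k + a + 1) / fact k)"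
proof -
  define f where "f = (\<lambda>k. (z/2)^(2*k) * rGamma (of_nat k + a + 1) / fact k)"
  obtain N :: nat where N: "real N \<ge> 2 * norm (z/2)^2 + norm (a+1) + 1"
    using real_arch_simple by blast
  have "norm (f (Suc n)) \<le> 1/2 * norm (f n)" if "n \<ge> N" for n
  proof -
    have nN: "real n \<ge> 2 * norm (z/2)^2 + norm (a+1) + 1" using N that by linarith
    define w where "w = of_nat n + a + 1"
    have "norm w \<ge> real n - norm (a+1)"
      unfolding w_def using norm_diff_ineq[of "of_nat n :: complex" "a+1"] by (simp add: add.assoc)
    hence w_ge: "norm w \<ge> 1" using nN by (smt (verit) zero_le_power2 norm_ge_zero)
    hence "w \<noteq> 0" by auto
    hence "rGamma (of_nat (Suc n) + a + 1) = rGamma w / w"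
      using rGamma_plus1[of w] by (simp add: w_def field_simps add_ac)
    hence "f (Suc n) = f n * ((z/2)^2 / (w * of_nat (Suc n)))"
      unfolding f_def by (simp add: w_def field_simps power_mult_distrib power2_eq_square power_add)
    hence "norm (f (Suc n)) = norm (f n) * (norm (z/2)^2 / (norm w * real (Suc n)))"
      by (simp add: norm_mult norm_divide norm_power del: of_nat_Suc)
    also have "norm (z/2)^2 / (norm w * real (Suc n)) \<le> 1/2"
    proof -
      have "norm w * real (Suc n) \<ge> real (Suc n)" using w_ge by simp
      moreover have "real (Suc n) \<ge> 2 * norm (z/2)^2"
        using nN norm_ge_zero[of "a+1"] by (simp only: of_nat_Suc)
      ultimately show ?thesis using w_ge by (simp add: field_simps)
    qed
    hence "norm (f n) * (norm (z/2)^2 / (norm w * real (Suc n))) \<le> norm (f n) * (1/2)"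
      by (intro mult_left_mono) auto
    finally show ?thesis by simp
  qed
  hence "summable f" by (intro summable_ratio_test[of "1/2" N]) auto
  thus ?thesis by (simp add: f_def)
qed

lemma sums_BesselI_tilde:
  "(\<lambda>k. (z/2)^(2*k) * rGamma (of_nat k + a + 1) / fact k) sums BesselI_tilde a z"
  unfolding BesselI_tilde_def using summable_BesselI_tilde_series by (rule summable_sums)

lemma BesselI_tilde_recurrence:
  "BesselI_tilde a z = (a+1) * BesselI_tilde (a+1) z + (z/2)^2 * BesselI_tilde (a+2) z"
proof -
  define h where "h = (\<lambda>k. (z/2)^(2*k) * rGamma (of_nat k + a + 2) * of_nat k / fact k)"
  have shifted: "(\<lambda>k. (z/2)^2 * ((z/2)^(2*k) * rGamma (of_nat k + (a+2) + 1) / fact k))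
          sums ((z/2)^2 * BesselI_tilde (a+2) z)"
    by (intro sums_mult sums_BesselI_tilde)
  have h_shift: "(\<lambda>k. (z/2)^2 * ((z/2)^(2*k) * rGamma (of_nat k + (a+2) + 1) / fact k)) = (\<lambda>k. h (Suc k))"
  proof
    fix k
    have nz: "(of_nat (Suc k) :: complex) \<noteq> 0" by (metis Zero_not_Suc of_nat_eq_0_iff)
    have fact_Suc': "(fact (Suc k) :: complex) = of_nat (Suc k) * fact k" by simp
    have order: "of_nat (Suc k) + a + 2 = of_nat k + (a+2) + (1::complex)" by (simp add: add_ac)
    have power_Suc: "(z/2)^(2 * Suc k) = (z/2)^2 * (z/2)^(2*k)" by (simp add: power_add[symmetric])
    show "(z/2)^2 * ((z/2)^(2*k) * rGamma (of_nat k + (a+2) + 1) / fact k) = h (Suc k)"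
      unfolding h_def fact_Suc' order power_Suc using nz by (simp add: divide_simps del: of_nat_Suc)
  qed
  have "(\<lambda>k. h (Suc k)) sums ((z/2)^2 * BesselI_tilde (a+2) z)"
    using shifted unfolding h_shift .
  hence "h sums ((z/2)^2 * BesselI_tilde (a+2) z + h 0)"
    by (simp add: sums_Suc_iff)
  hence h_sums: "h sums ((z/2)^2 * BesselI_tilde (a+2) z)" by (simp add: h_def)
  have "(\<lambda>k. (a+1) * ((z/2)^(2*k) * rGamma (of_nat k + (a+1) + 1) / fact k))
          sums ((a+1) * BesselI_tilde (a+1) z)"
    by (intro sums_mult sums_BesselI_tilde)
  hence sum: "(\<lambda>k. (a+1) * ((z/2)^(2*k) * rGamma (of_nat k + (a+1) + 1) / fact k) + h k)
      sums ((a+1) * BesselI_tilde (a+1) z + (z/2)^2 * BesselI_tilde (a+2) z)"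
    using h_sums by (rule sums_add)
  have terms: "(\<lambda>k. (a+1) * ((z/2)^(2*k) * rGamma (of_nat k + (a+1) + 1) / fact k) + h k) =
                 (\<lambda>k. (z/2)^(2*k) * rGamma (of_nat k + a + 1) / fact k)"
  proof
    fix k
    have rGamma_step: "rGamma (of_nat k + a + 1) = (of_nat k + a + 1) * rGamma (of_nat k + a + 2)"
      using rGamma_plus1[of "of_nat k + a + 1"] by (simp add: add.assoc)
    have order: "of_nat k + (a+1) + 1 = of_nat k + a + (2::complex)" by simp
    show "(a+1) * ((z/2)^(2*k) * rGamma (of_nat k + (a+1) + 1) / fact k) + h k =
          (z/2)^(2*k) * rGamma (of_nat k + a + 1) / fact k"
      unfolding h_def rGamma_step order by (simp add: algebra_simps add_divide_distrib[symmetric])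
  qed
  show ?thesis using sums_BesselI_tilde[of z a] sum unfolding terms by (rule sums_unique2)
qed

lemma of_nat_plus_half_not_nonpos_Int: "(of_nat n + 1/2 :: complex) \<notin> \<int>\<^sub>\<le>\<^sub>0"
proof
  assume "(of_nat n + 1/2 :: complex) \<in> \<int>\<^sub>\<le>\<^sub>0"
  then obtain m where "(of_nat n + 1/2 :: complex) = - of_nat m" by (elim nonpos_Ints_cases')
  hence "Re (of_nat n + 1/2 :: complex) = Re (- of_nat m)" by simp
  thus False by simp
qed

lemma of_nat_plus_half_neq_0: "(of_nat n + 1/2 :: complex) \<noteq> 0"
  using of_nat_plus_half_not_nonpos_Int[of n] by auto

lemma four_power_complex: "(4::complex)^k = 2^k * 2^k"
  by (simp add: power_mult_distrib[symmetric])

lemma two_power_double_complex: "(2::complex)^(2*k) = 2^k * 2^k" "(2::complex)^(k*2) = 2^k * 2^k"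
  by (simp_all add: power_add[symmetric] mult_2 mult_2_right)

lemma rGamma_of_nat_plus_half:
  "rGamma (of_nat k + 1/2 :: complex) = 4^k * fact k / (fact (2*k) * of_real (sqrt pi))"
proof (induction k)
  case 0
  then show ?case by (simp add: rGamma_inverse_Gamma Gamma_one_half_complex field_simps)
next
  case (Suc k)
  have fact_double_Suc: "(fact (2 * Suc k) :: complex) = (2 * of_nat k + 2) * (2 * of_nat k + 1) * fact (2*k)"
    by (simp add: algebra_simps)
  have nz: "(2 * of_nat k + 1 :: complex) \<noteq> 0" "(of_nat k + 1 :: complex) \<noteq> 0"
    by (auto simp: complex_eq_iff)
  have "rGamma (of_nat (Suc k) + 1/2 :: complex) = rGamma (of_nat k + 1/2) / (of_nat k + 1/2)"
    using rGamma_plus1[of "of_nat k + 1/2 :: complex"] of_nat_plus_half_neq_0[of k]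
    by (simp add: field_simps add_ac)
  also have "\<dots> = 4 * (4^k * fact k) * (of_nat k + 1)
                   / ((2 * of_nat k + 2) * (2 * of_nat k + 1) * (fact (2*k) * of_real (sqrt pi)))"
    unfolding Suc.IH using nz by (simp add: divide_simps) algebra
  also have "\<dots> = 4^(Suc k) * fact (Suc k) / (fact (2*Suc k) * of_real (sqrt pi))"
    unfolding fact_double_Suc by (simp add: mult_ac)
  finally show ?case .
qed

lemma BesselI_tilde_minus_half: "BesselI_tilde (-(1/2)) z = cosh z / of_real (sqrt pi)"
proof -
  have "(\<lambda>n. if even n then z ^ n /\<^sub>R fact n else 0) sums cosh z" by (rule cosh_converges)
  also have "(\<lambda>n. if even n then z ^ n /\<^sub>R fact n else 0) sums cosh z \<longleftrightarrow>
     (\<lambda>n. z^(2*n) /\<^sub>R fact (2*n)) sums cosh z"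
    by (subst sums_mono_reindex[of "\<lambda>n. 2*n", symmetric])
       (auto simp: strict_mono_def elim!: evenE)
  finally have "(\<lambda>n. z^(2*n) /\<^sub>R fact (2*n) / of_real (sqrt pi)) sums (cosh z / of_real (sqrt pi))"
    by (rule sums_divide)
  moreover have "(\<lambda>n. z^(2*n) /\<^sub>R fact (2*n) / of_real (sqrt pi)) =
                 (\<lambda>k. (z/2)^(2*k) * rGamma (of_nat k + -(1/2) + 1) / fact k)"
  proof
    fix k
    have order: "of_nat k + -(1/2) + 1 = (of_nat k + 1/2 :: complex)" by simp
    show "z^(2*k) /\<^sub>R fact (2*k) / of_real (sqrt pi) =
          (z/2)^(2*k) * rGamma (of_nat k + -(1/2) + 1) / fact k"
      unfolding order rGamma_of_nat_plus_half
      by (simp add: scaleR_conv_of_real power_divide four_power_complex two_power_double_complex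
                    divide_simps)
  qed
  ultimately show ?thesis using sums_BesselI_tilde[of z "-(1/2)"] by (simp add: sums_unique2)
qed

lemma BesselI_tilde_half: "z * BesselI_tilde (1/2) z = 2 * sinh z / of_real (sqrt pi)"
proof -
  have "(\<lambda>n. if even n then 0 else z ^ n /\<^sub>R fact n) sums sinh z" by (rule sinh_converges)
  also have "(\<lambda>n. if even n then 0 else z ^ n /\<^sub>R fact n) sums sinh z \<longleftrightarrow>
     (\<lambda>n. z^(2*n+1) /\<^sub>R fact (2*n+1)) sums sinh z"
    by (subst sums_mono_reindex[of "\<lambda>n. 2*n+1", symmetric])
       (auto simp: strict_mono_def elim!: oddE)
  finally have sinh_sums: "(\<lambda>n. 2 * (z^(2*n+1) /\<^sub>R fact (2*n+1)) / of_real (sqrt pi))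
                             sums (2 * sinh z / of_real (sqrt pi))"
    by (intro sums_divide sums_mult)
  have I_sums: "(\<lambda>k. z * ((z/2)^(2*k) * rGamma (of_nat k + 1/2 + 1) / fact k))
                  sums (z * BesselI_tilde (1/2) z)"
    by (intro sums_mult sums_BesselI_tilde)
  have terms: "(\<lambda>n. 2 * (z^(2*n+1) /\<^sub>R fact (2*n+1)) / of_real (sqrt pi)) =
               (\<lambda>k. z * ((z/2)^(2*k) * rGamma (of_nat k + 1/2 + 1) / fact k))"
  proof
    fix k
    have rGamma_step: "rGamma (of_nat k + 1/2 + 1) = rGamma (of_nat k + 1/2 :: complex) / (of_nat k + 1/2)"
      using rGamma_plus1[of "of_nat k + 1/2 :: complex"] of_nat_plus_half_neq_0[of k]
      by (simp add: field_simps)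
    have fact_odd: "(fact (2*k+1) :: complex) = (2 * of_nat k + 1) * fact (2*k)"
      by (simp add: algebra_simps)
    have half: "(of_nat k + 1/2 :: complex) = (2 * of_nat k + 1) / 2" by simp
    have nz: "(2 * of_nat k + 1 :: complex) \<noteq> 0" by (auto simp: complex_eq_iff)
    show "2 * (z^(2*k+1) /\<^sub>R fact (2*k+1)) / of_real (sqrt pi) =
          z * ((z/2)^(2*k) * rGamma (of_nat k + 1/2 + 1) / fact k)"
      unfolding rGamma_step rGamma_of_nat_plus_half scaleR_conv_of_real of_real_inverse of_real_fact fact_odd
      unfolding half using nz
      by (simp add: power_divide four_power_complex two_power_double_complex divide_simps)
  qed
  show ?thesis using sinh_sums I_sums unfolding terms by (rule sums_unique2[symmetric])
qed

section \<open>Bessel functions of half-integer order\<close>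

text \<open>\<open>bessel_poly l\<close> is the Bessel polynomial \<open>y_l(y) = sum_k (l+k)!/((l-k)! k!) (y/2)^k\<close>.\<close>

fun bessel_poly :: "nat \<Rightarrow> complex poly" where
  "bessel_poly 0 = 1"
| "bessel_poly (Suc 0) = [:1, 1:]"
| "bessel_poly (Suc (Suc l)) = bessel_poly l + smult (2 * of_nat l + 3) (pCons 0 (bessel_poly (Suc l)))"

lemma degree_bessel_poly_le: "degree (bessel_poly l) \<le> l"
proof (induction l rule: bessel_poly.induct)
  case (3 l)
  have "degree (smult (2 * of_nat l + 3) (pCons 0 (bessel_poly (Suc l)))) \<le> Suc (Suc l)"
    using 3(2) by (intro order.trans[OF degree_smult_le] order.trans[OF degree_pCons_le]) simp
  moreover have "degree (bessel_poly l) \<le> Suc (Suc l)" using 3(1) by simp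
  ultimately show ?case by (simp add: degree_add_le)
qed simp_all

lemma coeff_0_bessel_poly: "coeff (bessel_poly l) 0 = 1"
  by (induction l rule: bessel_poly.induct) simp_all

lemma lead_coeff_bessel_poly:
  "coeff (bessel_poly l) l = 2^l * Gamma (of_nat l + 1/2) / of_real (sqrt pi)"
proof (induction l rule: bessel_poly.induct)
  case 1 thus ?case by (simp add: Gamma_one_half_complex)
next
  case 2
  have "Gamma (of_nat 1 + 1/2 :: complex) = (1/2) * Gamma (1/2)"
    using Gamma_plus1[of "1/2 :: complex"] of_nat_plus_half_not_nonpos_Int[of 0] by simp
  thus ?case by (simp add: Gamma_one_half_complex algebra_simps)
next
  case (3 l)
  have "coeff (bessel_poly l) (Suc (Suc l)) = 0"
    using degree_bessel_poly_le[of l] by (intro coeff_eq_0) simp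
  hence "coeff (bessel_poly (Suc (Suc l))) (Suc (Suc l)) = (2 * of_nat l + 3) * coeff (bessel_poly (Suc l)) (Suc l)"
    by simp
  also have "\<dots> = (2 * of_nat l + 3) * (2^(Suc l) * Gamma (of_nat (Suc l) + 1/2) / of_real (sqrt pi))"
    using 3(2) by simp
  also have "\<dots> = 2^(Suc (Suc l)) * Gamma (of_nat (Suc (Suc l)) + 1/2) / of_real (sqrt pi)"
  proof -
    have Gamma_Suc: "Gamma (of_nat (Suc (Suc l)) + 1/2 :: complex)
                       = (of_nat (Suc l) + 1/2) * Gamma (of_nat (Suc l) + 1/2)"
      using Gamma_plus1[OF of_nat_plus_half_not_nonpos_Int[of "Suc l"]] by (simp add: add_ac)
    show ?thesis unfolding Gamma_Suc by (simp add: field_simps)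
  qed
  finally show ?case .
qed

text \<open>\<open>(2/pi) Ktilde_{l+1/2}(z)\<close> expressed through \<open>Itilde_{-(l+1/2)}\<close> and \<open>Itilde_{l+1/2}\<close>,
  using \<open>sin((l+1/2) pi) = (-1)^l\<close>.\<close>

definition BesselK_half_from_I :: "nat \<Rightarrow> complex \<Rightarrow> complex" where
  "BesselK_half_from_I l z = (-1)^l * (inverse ((z/2)^(2*l+1)) * BesselI_tilde (-(of_nat l + 1/2)) z
                                       - BesselI_tilde (of_nat l + 1/2) z)"

definition BesselK_half_closed :: "nat \<Rightarrow> complex \<Rightarrow> complex" where
  "BesselK_half_closed l z =
     2^l * of_real (sqrt pi) * inverse (z^(l+1)) * exp (-z) * poly (bessel_poly l) (inverse z)"

lemma BesselK_half_from_I_recurrence: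
  assumes "z \<noteq> 0"
  shows "(z/2)^2 * BesselK_half_from_I (Suc (Suc l)) z
           = BesselK_half_from_I l z + (of_nat l + 3/2) * BesselK_half_from_I (Suc l) z"
proof -
  define w where "w = z/2"
  have "w \<noteq> 0" using assms by (simp add: w_def)
  have up: "BesselI_tilde (of_nat l + 1/2) z = (of_nat l + 3/2) * BesselI_tilde (of_nat (Suc l) + 1/2) z
              + w^2 * BesselI_tilde (of_nat (Suc (Suc l)) + 1/2) z"
    using BesselI_tilde_recurrence[of "of_nat l + 1/2" z] unfolding w_def
    by (simp add: add_ac)
  have down: "BesselI_tilde (-(of_nat (Suc (Suc l)) + 1/2)) z
                = -(of_nat l + 3/2) * BesselI_tilde (-(of_nat (Suc l) + 1/2)) z
                  + w^2 * BesselI_tilde (-(of_nat l + 1/2)) z"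
    using BesselI_tilde_recurrence[of "-(of_nat (Suc (Suc l)) + 1/2)" z] unfolding w_def
    by (simp add: algebra_simps)
  show ?thesis
    unfolding BesselK_half_from_I_def w_def[symmetric] up down
    using \<open>w \<noteq> 0\<close> by (simp add: field_simps power_add power2_eq_square)
qed

lemma BesselK_half_closed_recurrence:
  assumes "z \<noteq> 0"
  shows "(z/2)^2 * BesselK_half_closed (Suc (Suc l)) z
           = BesselK_half_closed l z + (of_nat l + 3/2) * BesselK_half_closed (Suc l) z"
  unfolding BesselK_half_closed_def using assms by (simp add: field_simps power2_eq_square)

lemma BesselK_half_from_I_eq_closed:
  assumes "z \<noteq> 0"
  shows "of_real pi / 2 * BesselK_half_from_I l z = BesselK_half_closed l z"
proof -
  have pi: "(of_real pi :: complex) = of_real (sqrt pi) * of_real (sqrt pi)"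
    by (simp flip: of_real_mult)
  have "BesselI_tilde (1/2) z = (z * BesselI_tilde (1/2) z) / z" using assms by simp
  hence I_half: "BesselI_tilde (1/2) z = 2 * sinh z / (of_real (sqrt pi) * z)"
    unfolding BesselI_tilde_half by simp
  have I_minus_half: "BesselI_tilde (-(1/2)) z = cosh z / of_real (sqrt pi)"
    by (rule BesselI_tilde_minus_half)
  have exp_minus: "exp (-z) = cosh z - sinh z" by (simp add: cosh_minus_sinh)
  show ?thesis
  proof (induction l rule: bessel_poly.induct)
    case 1
    have orders: "-(of_nat 0 + 1/2) = -(1/2::complex)" "of_nat 0 + 1/2 = (1/2::complex)" by simp_all
    show ?case
      unfolding BesselK_half_from_I_def BesselK_half_closed_def orders I_half I_minus_half exp_minus
      using assms by (simp add: pi field_simps)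
  next
    case 2
    have I_3half: "BesselI_tilde (3/2) z = (BesselI_tilde (-(1/2)) z - 1/2 * BesselI_tilde (1/2) z) / (z/2)^2"
      using BesselI_tilde_recurrence[of "-(1/2)" z] assms by (simp add: field_simps)
    have I_minus_3half: "BesselI_tilde (-(3/2)) z = -(1/2) * BesselI_tilde (-(1/2)) z + (z/2)^2 * BesselI_tilde (1/2) z"
      using BesselI_tilde_recurrence[of "-(3/2)" z] by simp
    have orders: "-(of_nat (Suc 0) + 1/2) = -(3/2::complex)" "of_nat (Suc 0) + 1/2 = (3/2::complex)" by simp_all
    show ?case
      unfolding BesselK_half_from_I_def BesselK_half_closed_def orders I_3half I_minus_3half
        I_half I_minus_half exp_minus
      using assms by (simp add: pi field_simps power2_eq_square power3_eq_cube)
  next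
    case (3 l)
    have "(z/2)^2 * (of_real pi / 2 * BesselK_half_from_I (Suc (Suc l)) z)
            = of_real pi / 2 * BesselK_half_from_I l z
              + (of_nat l + 3/2) * (of_real pi / 2 * BesselK_half_from_I (Suc l) z)"
      using BesselK_half_from_I_recurrence[OF assms, of l] by (simp add: algebra_simps)
    also have "\<dots> = (z/2)^2 * BesselK_half_closed (Suc (Suc l)) z"
      using 3 BesselK_half_closed_recurrence[OF assms, of l] by simp
    finally show ?case using assms by simp
  qed
qed

lemma of_nat_plus_half_not_Int: "(of_nat l + 1/2 :: complex) \<notin> \<int>"
proof
  assume "(of_nat l + 1/2 :: complex) \<in> \<int>"
  then obtain m where "(of_nat l + 1/2 :: complex) = of_int m" by (auto elim: Ints_cases)
  hence "Re (of_nat l + 1/2 :: complex) = Re (of_int m)" by simp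
  hence "real l + 1/2 = real_of_int m" by simp
  hence "real_of_int (2 * int l + 1) = real_of_int (2 * m)" by simp
  hence "2 * int l + 1 = 2 * m" by (simp only: of_int_eq_iff)
  thus False by presburger
qed

lemma sin_of_nat_plus_half_pi: "sin ((of_nat l + 1/2) * of_real pi :: complex) = (-1)^l"
proof -
  have "(of_nat l + 1/2) * of_real pi = (of_real ((real l + 1/2) * pi) :: complex)" by simp
  hence "sin ((of_nat l + 1/2) * of_real pi :: complex) = of_real (sin (real l * pi + pi/2))"
    by (simp only: sin_of_real) (simp add: algebra_simps)
  also have "sin (real l * pi + pi/2) = (-1)^l" by (simp add: sin_add cos_npi)
  finally show ?thesis by simp
qed

lemma BesselK_tilde_half_integer:
  assumes "z \<noteq> 0"
  shows "BesselK_tilde (of_nat l + 1/2) z = BesselK_half_closed l z"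
proof -
  define a where "a = (of_nat l + 1/2 :: complex)"
  define w where "w = z/2"
  have "w \<noteq> 0" using assms by (simp add: w_def)
  have powr_minus_twice: "w powr (-a) * w powr (-a) = inverse (w^(2*l+1))"
  proof -
    have "-a + -a = -(of_nat (2*l+1))" by (simp add: a_def algebra_simps)
    hence "w powr (-a) * w powr (-a) = w powr (-(of_nat (2*l+1)))"
      by (metis powr_add)
    also have "\<dots> = inverse (w powr (of_nat (2*l+1)))" by (rule powr_minus)
    also have "\<dots> = inverse (w^(2*l+1))"
      using powr_complexpow[OF \<open>w \<noteq> 0\<close>, of "2*l+1"] by (simp only:)
    finally show ?thesis .
  qed
  have powr_cancel: "w powr (-a) * w powr a = 1"
    using \<open>w \<noteq> 0\<close> by (simp add: powr_add[symmetric])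
  have "BesselK_tilde a z = w powr (-a) * (of_real pi / 2 * (w powr (-a) * BesselI_tilde (-a) z
                - w powr a * BesselI_tilde a z) / (-1)^l)"
    unfolding BesselK_tilde_def BesselK_def BesselK_aux_def BesselI_def
    using of_nat_plus_half_not_Int[of l] sin_of_nat_plus_half_pi[of l] by (simp add: a_def w_def)
  also have "\<dots> = of_real pi / 2 * ((w powr (-a) * w powr (-a)) * BesselI_tilde (-a) z
                - (w powr (-a) * w powr a) * BesselI_tilde a z) / (-1)^l"
    by (simp add: algebra_simps)
  also have "\<dots> = of_real pi / 2 * BesselK_half_from_I l z"
    unfolding powr_minus_twice powr_cancel
    unfolding BesselK_half_from_I_def a_def w_def[symmetric]
    by (cases "even l") (simp_all add: algebra_simps)
  also have "\<dots> = BesselK_half_closed l z" by (rule BesselK_half_from_I_eq_closed[OF assms])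
  finally show ?thesis by (simp add: a_def)
qed

lemma BesselK_tilde_half_integer_sum:
  assumes "z \<noteq> 0"
  shows "BesselK_tilde (of_nat l + 1/2) z
           = 2^l * of_real (sqrt pi) * (inverse z)^(l+1) * exp (-z)
             * (\<Sum>k\<le>l. coeff (bessel_poly l) k * (inverse z)^k)"
  unfolding BesselK_tilde_half_integer[OF assms] BesselK_half_closed_def poly_altdef
  using degree_bessel_poly_le[of l]
  by (simp add: power_inverse sum.mono_neutral_right[of "{..l}" "{..degree (bessel_poly l)}"] coeff_eq_0)

section \<open>Power series\<close>

definition BesselI_tilde_fps :: "complex \<Rightarrow> complex fps" where
  "BesselI_tilde_fps \<nu> = Abs_fps (\<lambda>n. if even n then rGamma (of_nat (n div 2) + \<nu> + 1) / (4^(n div 2) * fact (n div 2)) else 0)"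

definition exp_neg_BesselI_fps :: "complex \<Rightarrow> complex fps" where
  "exp_neg_BesselI_fps \<nu> = fps_exp (-1) * BesselI_tilde_fps \<nu>"

lemma BesselI_tilde_fps_nth_recurrence:
  "of_nat (Suc m) * (of_nat m + 2*\<nu>+1) * (BesselI_tilde_fps \<nu> $ Suc m)
     = (if m = 0 then 0 else BesselI_tilde_fps \<nu> $ (m - 1))"
proof (cases "even m")
  case True
  then show ?thesis by (cases m) (auto simp: BesselI_tilde_fps_def)
next
  case False
  then obtain k where m: "m = 2*k+1" by (auto elim: oddE)
  have rGamma_Suc: "rGamma (of_nat k + \<nu> + 1) = (of_nat k + \<nu> + 1) * rGamma (of_nat (Suc k) + \<nu> + 1)"
    using rGamma_plus1[of "of_nat k + \<nu> + 1"] by (simp add: add_ac)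
  have "Suc m = 2 * Suc k" "m - 1 = 2*k" using m by simp_all
  hence "of_nat (Suc m) * (of_nat m + 2*\<nu>+1) * (BesselI_tilde_fps \<nu> $ Suc m)
      = (2 * of_nat (Suc k)) * (2 * (of_nat k + \<nu> + 1))
          * (rGamma (of_nat (Suc k) + \<nu> + 1) / (4^(Suc k) * fact (Suc k)))"
    "BesselI_tilde_fps \<nu> $ (m - 1) = rGamma (of_nat k + \<nu> + 1) / (4^k * fact k)"
    unfolding BesselI_tilde_fps_def using m by (simp_all add: algebra_simps)
  moreover have "(2 * of_nat (Suc k)) * (2 * (of_nat k + \<nu> + 1))
                   * (rGamma (of_nat (Suc k) + \<nu> + 1) / (4^(Suc k) * fact (Suc k)))
                 = rGamma (of_nat k + \<nu> + 1) / (4^k * fact k)"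
    unfolding rGamma_Suc by (simp add: field_simps del: of_nat_Suc)
  ultimately show ?thesis using m by simp
qed

lemma BesselI_tilde_fps_ode:
  "fps_X * fps_deriv (fps_deriv (BesselI_tilde_fps \<nu>)) + fps_const (2*\<nu>+1) * fps_deriv (BesselI_tilde_fps \<nu>)
     = fps_X * BesselI_tilde_fps \<nu>"
proof (rule fps_ext)
  fix m
  have "(fps_X * fps_deriv (fps_deriv (BesselI_tilde_fps \<nu>))
          + fps_const (2*\<nu>+1) * fps_deriv (BesselI_tilde_fps \<nu>)) $ m
        = of_nat (Suc m) * (of_nat m + 2*\<nu>+1) * (BesselI_tilde_fps \<nu> $ Suc m)"
    by (cases m) (simp_all add: algebra_simps)
  also have "\<dots> = (fps_X * BesselI_tilde_fps \<nu>) $ m"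
    by (subst BesselI_tilde_fps_nth_recurrence) simp
  finally show "(fps_X * fps_deriv (fps_deriv (BesselI_tilde_fps \<nu>))
          + fps_const (2*\<nu>+1) * fps_deriv (BesselI_tilde_fps \<nu>)) $ m
        = (fps_X * BesselI_tilde_fps \<nu>) $ m" .
qed

lemma exp_neg_BesselI_fps_ode:
  "fps_X * fps_deriv (fps_deriv (exp_neg_BesselI_fps \<nu>))
     + fps_const (2*\<nu>+1) * fps_deriv (exp_neg_BesselI_fps \<nu>)
     + fps_const 2 * (fps_X * fps_deriv (exp_neg_BesselI_fps \<nu>))
     + fps_const (2*\<nu>+1) * exp_neg_BesselI_fps \<nu> = 0"
proof -
  define E where "E = (fps_exp (-1) :: complex fps)"
  define I where "I = BesselI_tilde_fps \<nu>"
  define c where "c = fps_const (2*\<nu>+1)"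
  have dE: "fps_deriv E = - E" by (simp add: E_def fps_eq_iff)
  have ode: "fps_X * fps_deriv (fps_deriv I) = fps_X * I - c * fps_deriv I"
    using BesselI_tilde_fps_ode[of \<nu>] unfolding I_def c_def by (simp add: algebra_simps)
  have "fps_X * fps_deriv (fps_deriv (E * I)) + (c + 2 * fps_X) * fps_deriv (E * I) + c * (E * I)
      = E * (fps_X * fps_deriv (fps_deriv I)) - fps_X * E * I + c * E * fps_deriv I"
    by (simp add: dE algebra_simps)
  also have "\<dots> = 0" unfolding ode by (simp add: algebra_simps)
  finally show ?thesis
    by (simp add: exp_neg_BesselI_fps_def E_def I_def c_def algebra_simps flip: numeral_fps_const)
qed

lemma exp_neg_BesselI_fps_nth_recurrence:
  "of_nat (Suc m) * (of_nat m + 2*\<nu>+1) * (exp_neg_BesselI_fps \<nu> $ Suc m)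
     = - (2 * of_nat m + 2*\<nu>+1) * (exp_neg_BesselI_fps \<nu> $ m)"
proof -
  let ?E = "exp_neg_BesselI_fps \<nu>"
  have "(fps_X * fps_deriv (fps_deriv ?E) + fps_const (2*\<nu>+1) * fps_deriv ?E
           + fps_const 2 * (fps_X * fps_deriv ?E) + fps_const (2*\<nu>+1) * ?E) $ m = 0"
    by (simp only: exp_neg_BesselI_fps_ode) simp
  moreover have "(fps_X * fps_deriv (fps_deriv ?E)) $ m = of_nat m * of_nat (Suc m) * ?E $ Suc m"
    by (cases m) (simp_all add: algebra_simps)
  moreover have "(fps_const 2 * (fps_X * fps_deriv ?E)) $ m = 2 * of_nat m * ?E $ m"
    by (cases m) (simp_all add: algebra_simps)
  moreover have "(fps_const (2*\<nu>+1) * fps_deriv ?E) $ m = (2*\<nu>+1) * of_nat (Suc m) * ?E $ Suc m"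
    by (simp add: algebra_simps)
  ultimately have "of_nat m * of_nat (Suc m) * ?E $ Suc m + (2*\<nu>+1) * of_nat (Suc m) * ?E $ Suc m
     + 2 * of_nat m * ?E $ m + (2*\<nu>+1) * ?E $ m = 0"
    by (simp only: fps_add_nth fps_mult_left_const_nth)
  thus ?thesis by algebra
qed

lemma exp_neg_BesselI_fps_nth_0: "exp_neg_BesselI_fps \<nu> $ 0 = rGamma (\<nu> + 1)"
  by (simp add: exp_neg_BesselI_fps_def BesselI_tilde_fps_def fps_mult_nth)

lemma has_fps_expansion_BesselI_tilde: "BesselI_tilde \<nu> has_fps_expansion BesselI_tilde_fps \<nu>"
proof (rule has_fps_expansionI, rule always_eventually, rule allI)
  fix u :: complex
  have "(\<lambda>n. BesselI_tilde_fps \<nu> $ (2*n) * u^(2*n))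
          = (\<lambda>k. (u/2)^(2*k) * rGamma (of_nat k + \<nu> + 1) / fact k)"
    by (simp add: BesselI_tilde_fps_def power_divide four_power_complex two_power_double_complex
                  field_simps)
  hence "(\<lambda>n. BesselI_tilde_fps \<nu> $ (2*n) * u^(2*n)) sums BesselI_tilde \<nu> u"
    using sums_BesselI_tilde by simp
  moreover have "(\<lambda>n. BesselI_tilde_fps \<nu> $ (2*n) * u^(2*n)) sums BesselI_tilde \<nu> u \<longleftrightarrow>
                 (\<lambda>n. BesselI_tilde_fps \<nu> $ n * u^n) sums BesselI_tilde \<nu> u"
    by (rule sums_mono_reindex) (auto simp: strict_mono_def BesselI_tilde_fps_def elim!: evenE)
  ultimately show "(\<lambda>n. BesselI_tilde_fps \<nu> $ n * u^n) sums BesselI_tilde \<nu> u" by simp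
qed

lemma has_fps_expansion_exp_neg_BesselI:
  "(\<lambda>v. exp (-v) * BesselI_tilde \<nu> v) has_fps_expansion exp_neg_BesselI_fps \<nu>"
  unfolding exp_neg_BesselI_fps_def
  by (intro has_fps_expansion_mult has_fps_expansion_exp_neg1 has_fps_expansion_BesselI_tilde)

definition X_div_one_minus_X_fps :: "complex fps" where
  "X_div_one_minus_X_fps = Abs_fps (\<lambda>n. if n = 0 then 0 else 1)"

definition one_minus_X_powr_fps :: "complex \<Rightarrow> complex fps" where
  "one_minus_X_powr_fps c = Abs_fps (\<lambda>n. (-1)^n * (c gchoose n))"

lemma eventually_in_unit_ball: "eventually (\<lambda>t::complex. t \<in> ball 0 1) (nhds 0)"
  by (intro eventually_nhds_in_open) auto

lemma has_fps_expansion_X_div_one_minus_X: "(\<lambda>t. t / (1 - t)) has_fps_expansion X_div_one_minus_X_fps"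
proof (rule has_fps_expansionI)
  show "eventually (\<lambda>t. (\<lambda>n. X_div_one_minus_X_fps $ n * t^n) sums (t / (1 - t))) (nhds 0)"
    using eventually_in_unit_ball
  proof eventually_elim
    case (elim t)
    hence "(\<lambda>n. t^n) sums (1 / (1 - t))" by (intro geometric_sums) simp
    hence "(\<lambda>n. t * t^n) sums (t * (1 / (1 - t)))" by (rule sums_mult)
    hence "(\<lambda>n. X_div_one_minus_X_fps $ Suc n * t^(Suc n)) sums (t / (1 - t))"
      by (simp add: X_div_one_minus_X_fps_def)
    hence "(\<lambda>n. X_div_one_minus_X_fps $ n * t^n) sums (t / (1 - t) + X_div_one_minus_X_fps $ 0 * t^0)"
      by (rule sums_Suc_iff[THEN iffD1])
    thus ?case by (simp add: X_div_one_minus_X_fps_def)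
  qed
qed

lemma has_fps_expansion_one_minus_powr: "(\<lambda>t. (1 - t) powr c) has_fps_expansion one_minus_X_powr_fps c"
proof (rule has_fps_expansionI)
  show "eventually (\<lambda>t. (\<lambda>n. one_minus_X_powr_fps c $ n * t^n) sums ((1 - t) powr c)) (nhds 0)"
    using eventually_in_unit_ball
  proof eventually_elim
    case (elim t)
    hence "(\<lambda>n. (c gchoose n) * (-t)^n) sums (1 + (-t)) powr c"
      by (intro gen_binomial_complex) simp
    thus ?case by (simp add: one_minus_X_powr_fps_def power_minus' mult_ac)
  qed
qed

definition exp_neg_BesselI_subst :: "complex \<Rightarrow> complex \<Rightarrow> complex \<Rightarrow> complex" where
  "exp_neg_BesselI_subst \<nu> X t = exp (-(X/2 * (t/(1-t)))) * BesselI_tilde \<nu> (X/2 * (t/(1-t)))"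

definition exp_neg_BesselI_subst_fps :: "complex \<Rightarrow> complex \<Rightarrow> complex fps" where
  "exp_neg_BesselI_subst_fps \<nu> X = fps_compose (exp_neg_BesselI_fps \<nu>) (fps_const (X/2) * X_div_one_minus_X_fps)"

lemma has_fps_expansion_exp_neg_BesselI_subst:
  "exp_neg_BesselI_subst \<nu> X has_fps_expansion exp_neg_BesselI_subst_fps \<nu> X"
proof -
  have "exp_neg_BesselI_subst \<nu> X = (\<lambda>v. exp (-v) * BesselI_tilde \<nu> v) \<circ> (\<lambda>t. X/2 * (t/(1-t)))"
    by (simp add: fun_eq_iff exp_neg_BesselI_subst_def)
  thus ?thesis
    unfolding exp_neg_BesselI_subst_fps_def
    by (simp only:) (intro has_fps_expansion_compose has_fps_expansion_exp_neg_BesselI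
        has_fps_expansion_cmult_left has_fps_expansion_X_div_one_minus_X,
        simp add: X_div_one_minus_X_fps_def)
qed

lemma exp_neg_BesselI_subst_fps_nth:
  "exp_neg_BesselI_subst_fps \<nu> X $ m
     = (\<Sum>r=0..m. exp_neg_BesselI_fps \<nu> $ r * ((X/2)^r * (X_div_one_minus_X_fps^r $ m)))"
  unfolding exp_neg_BesselI_subst_fps_def fps_compose_nth by (simp add: power_mult_distrib)

lemma X_div_one_minus_X_fps_power_nth_self: "X_div_one_minus_X_fps ^ j $ j = 1"
proof -
  have X_factor: "X_div_one_minus_X_fps = fps_X * Abs_fps (\<lambda>_. 1)"
    by (rule fps_ext) (simp add: X_div_one_minus_X_fps_def)
  show ?thesis unfolding X_factor power_mult_distrib fps_X_power_mult_nth by (simp add: fps_nth_power_0)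
qed

lemma two_powr_complex: "(2::complex) powr a = exp (a * of_real (ln 2))"
proof -
  have "Ln (2::complex) = of_real (ln 2)" using Ln_of_real[of 2] by simp
  thus ?thesis by (simp add: powr_def)
qed

locale admissible_mu =
  fixes \<mu> :: complex
  assumes not_neg_int: "\<And>n::nat. \<mu> \<noteq> - of_nat (Suc n)"
begin

lemma of_nat_plus_mu_plus_one_not_nonpos_Int: "of_nat m + \<mu> + 1 \<notin> \<int>\<^sub>\<le>\<^sub>0"
proof
  assume "of_nat m + \<mu> + 1 \<in> \<int>\<^sub>\<le>\<^sub>0"
  then obtain n where "of_nat m + \<mu> + 1 = - of_nat n" by (elim nonpos_Ints_cases')
  hence "\<mu> = - of_nat (Suc (m + n))" by (simp add: field_simps) algebra
  thus False using not_neg_int by blast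
qed

lemma of_nat_plus_half_mu_not_nonpos_Int: "of_nat m + (\<mu>+1)/2 \<notin> \<int>\<^sub>\<le>\<^sub>0"
proof
  assume "of_nat m + (\<mu>+1)/2 \<in> \<int>\<^sub>\<le>\<^sub>0"
  then obtain n where "of_nat m + (\<mu>+1)/2 = - of_nat n" by (elim nonpos_Ints_cases')
  hence "\<mu> = - of_nat (Suc (2*m + 2*n))" by (simp add: field_simps) algebra
  thus False using not_neg_int by blast
qed

lemma half_mu_plus_one_not_nonpos_Int: "\<mu>/2 + 1 \<notin> \<int>\<^sub>\<le>\<^sub>0"
proof
  assume "\<mu>/2 + 1 \<in> \<int>\<^sub>\<le>\<^sub>0"
  then obtain n where "\<mu>/2 + 1 = - of_nat n" by (elim nonpos_Ints_cases')
  hence "\<mu> = - of_nat (Suc (2*n + 1))" by (simp add: field_simps) algebra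
  thus False using not_neg_int by blast
qed

lemma Gamma_of_nat_plus_mu_plus_one_neq_0: "Gamma (of_nat m + \<mu> + 1) \<noteq> 0"
  using of_nat_plus_mu_plus_one_not_nonpos_Int[of m] by (simp add: Gamma_eq_zero_iff)

lemma Gamma_of_nat_plus_half_mu_neq_0: "Gamma (of_nat m + (\<mu>+1)/2) \<noteq> 0"
  using of_nat_plus_half_mu_not_nonpos_Int[of m] by (simp add: Gamma_eq_zero_iff)

lemma rGamma_half_mu_plus_one:
  "rGamma (\<mu>/2 + 1) = Gamma ((\<mu>+1)/2) * 2 powr \<mu> / (of_real (sqrt pi) * Gamma (\<mu> + 1))"
proof -
  have "Gamma ((\<mu>+1)/2) * Gamma ((\<mu>+1)/2 + 1/2) =
          exp ((1 - 2*((\<mu>+1)/2)) * of_real (ln 2)) * of_real (sqrt pi) * Gamma (2*((\<mu>+1)/2))"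
  proof (rule Gamma_legendre_duplication)
    show "(\<mu>+1)/2 \<notin> \<int>\<^sub>\<le>\<^sub>0" using of_nat_plus_half_mu_not_nonpos_Int[of 0] by simp
    have "(\<mu>+1)/2 + 1/2 = \<mu>/2 + 1" by (simp add: field_simps)
    thus "(\<mu>+1)/2 + 1/2 \<notin> \<int>\<^sub>\<le>\<^sub>0" using half_mu_plus_one_not_nonpos_Int by simp
  qed
  moreover have "(\<mu>+1)/2 + 1/2 = \<mu>/2 + 1" "2*((\<mu>+1)/2) = \<mu> + 1" "1 - 2*((\<mu>+1)/2) = -\<mu>"
    by (simp_all add: field_simps)
  ultimately have duplication:
    "Gamma ((\<mu>+1)/2) * Gamma (\<mu>/2 + 1) = exp (-\<mu> * of_real (ln 2)) * of_real (sqrt pi) * Gamma (\<mu>+1)"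
    by (simp only:)
  have "Gamma (\<mu> + 1) \<noteq> 0" using Gamma_of_nat_plus_mu_plus_one_neq_0[of 0] by simp
  have "Gamma (\<mu>/2 + 1) * (Gamma ((\<mu>+1)/2) * exp (\<mu> * of_real (ln 2)) / (of_real (sqrt pi) * Gamma (\<mu> + 1)))
      = (Gamma ((\<mu>+1)/2) * Gamma (\<mu>/2 + 1)) * exp (\<mu> * of_real (ln 2)) / (of_real (sqrt pi) * Gamma (\<mu> + 1))"
    by (simp add: mult_ac)
  also have "\<dots> = (exp (\<mu> * of_real (ln 2)) * exp (-\<mu> * of_real (ln 2)))
                     * (of_real (sqrt pi) * Gamma (\<mu>+1)) / (of_real (sqrt pi) * Gamma (\<mu> + 1))"
    unfolding duplication by (simp add: mult_ac)
  also have "\<dots> = 1" using \<open>Gamma (\<mu> + 1) \<noteq> 0\<close> by (simp add: exp_add[symmetric])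
  finally have "inverse (Gamma (\<mu>/2 + 1))
           = Gamma ((\<mu>+1)/2) * exp (\<mu> * of_real (ln 2)) / (of_real (sqrt pi) * Gamma (\<mu> + 1))"
    by (rule inverse_unique)
  thus ?thesis unfolding rGamma_inverse_Gamma two_powr_complex .
qed

lemma exp_neg_BesselI_fps_nth:
  "exp_neg_BesselI_fps (\<mu>/2) $ m
     = (-2)^m * Gamma (of_nat m + (\<mu>+1)/2) * 2 powr \<mu> / (fact m * of_real (sqrt pi) * Gamma (of_nat m + \<mu> + 1))"
proof (induction m)
  case 0
  show ?case using rGamma_half_mu_plus_one by (simp add: exp_neg_BesselI_fps_nth_0 add_ac)
next
  case (Suc m)
  define L where "L = of_nat m + \<mu> + 1"
  define Ga where "Ga = Gamma (of_nat m + (\<mu>+1)/2)"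
  define Gb where "Gb = Gamma L"
  have "L \<noteq> 0" using of_nat_plus_mu_plus_one_not_nonpos_Int[of m] unfolding L_def by auto
  have "Gb \<noteq> 0" unfolding Gb_def L_def by (rule Gamma_of_nat_plus_mu_plus_one_neq_0)
  have nz: "of_nat (Suc m) * L \<noteq> 0" using \<open>L \<noteq> 0\<close> by (simp del: of_nat_Suc)
  have Gamma_half: "Gamma (of_nat (Suc m) + (\<mu>+1)/2) = (of_nat m + L)/2 * Ga"
    using Gamma_plus1[OF of_nat_plus_half_mu_not_nonpos_Int[of m]]
    unfolding L_def Ga_def by (simp add: field_simps)
  have Gamma_full: "Gamma (of_nat (Suc m) + \<mu> + 1) = L * Gb"
    using Gamma_plus1[OF of_nat_plus_mu_plus_one_not_nonpos_Int[of m]]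
    unfolding L_def Gb_def by (simp add: add_ac)
  have "of_nat (Suc m) * L * exp_neg_BesselI_fps (\<mu>/2) $ Suc m
          = - (of_nat m + L) * exp_neg_BesselI_fps (\<mu>/2) $ m"
    using exp_neg_BesselI_fps_nth_recurrence[of m "\<mu>/2"] unfolding L_def by (simp add: algebra_simps)
  also have "\<dots> = of_nat (Suc m) * L * ((-2)^Suc m * Gamma (of_nat (Suc m) + (\<mu>+1)/2) * 2 powr \<mu>
                     / (fact (Suc m) * of_real (sqrt pi) * Gamma (of_nat (Suc m) + \<mu> + 1)))"
    unfolding Suc.IH Gamma_half Gamma_full Ga_def[symmetric] L_def[symmetric]
    unfolding Gb_def[symmetric]
    using \<open>L \<noteq> 0\<close> \<open>Gb \<noteq> 0\<close> by (simp add: field_simps del: of_nat_Suc)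
  finally show ?case by (rule mult_left_cancel[THEN iffD1, OF nz])
qed

end

section \<open>The generating function and its Taylor coefficients\<close>

lemma powr_power_regroup:
  fixes s Y \<mu> :: complex
  assumes "s \<noteq> 0" "Y \<noteq> 0" "k \<le> l"
  shows "s powr (-(of_nat l + (\<mu>+3)/2)) * Y^(2*l+1) * (s/Y)^(l+1) * (s/Y)^k
       = Y^(l-k) * s powr (of_nat k - (\<mu>+1)/2)"
proof -
  have "2*l+1 = (l-k) + ((l+1) + k)" using \<open>k \<le> l\<close> by simp
  hence Y_split: "Y^(2*l+1) = Y^(l-k) * (Y^(l+1) * Y^k)" by (simp only: power_add)
  have cancel: "Y^(l+1) * (s/Y)^(l+1) = s^(l+1)" "Y^k * (s/Y)^k = s^k"
    using \<open>Y \<noteq> 0\<close> by (simp_all add: power_divide)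
  have s_powr: "s^(l+1) * s^k = s powr (of_nat (l+1+k))"
    using powr_complexpow[OF \<open>s \<noteq> 0\<close>, of "l+1+k"] by (simp add: power_add)
  have "s powr (-(of_nat l + (\<mu>+3)/2)) * Y^(2*l+1) * (s/Y)^(l+1) * (s/Y)^k
      = Y^(l-k) * (s powr (-(of_nat l + (\<mu>+3)/2)) * ((Y^(l+1) * (s/Y)^(l+1)) * (Y^k * (s/Y)^k)))"
    unfolding Y_split by (simp add: mult_ac)
  also have "\<dots> = Y^(l-k) * (s powr (-(of_nat l + (\<mu>+3)/2)) * s powr (of_nat (l+1+k)))"
    unfolding cancel s_powr ..
  also have "s powr (-(of_nat l + (\<mu>+3)/2)) * s powr (of_nat (l+1+k)) = s powr (of_nat k - (\<mu>+1)/2)"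
    by (simp add: powr_add[symmetric] field_simps)
  finally show ?thesis .
qed

definition G_coeff :: "nat \<Rightarrow> complex \<Rightarrow> nat \<Rightarrow> complex" where
  "G_coeff l X k = 2^l * of_real (sqrt pi) * coeff (bessel_poly l) k * (X/2)^(l-k)"

definition G_expanded :: "complex \<Rightarrow> nat \<Rightarrow> complex \<Rightarrow> complex \<Rightarrow> complex" where
  "G_expanded \<mu> l X t =
     (\<Sum>k\<le>l. G_coeff l X k * ((1 - t) powr (of_nat k - (\<mu>+1)/2) * exp_neg_BesselI_subst (\<mu>/2) X t))"

lemma G_gen_eq_G_expanded:
  assumes "x > 0" "t \<noteq> 1"
  shows "G_gen \<mu> l t x = G_expanded \<mu> l (of_real x) t"
proof -
  define X where "X = (of_real x :: complex)"
  define s where "s = 1 - t"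
  define Y where "Y = X/2"
  define z where "z = X / (2 * s)"
  have "s \<noteq> 0" using assms by (simp add: s_def)
  have "Y \<noteq> 0" using assms by (simp add: Y_def X_def)
  have "z \<noteq> 0" using \<open>s \<noteq> 0\<close> \<open>Y \<noteq> 0\<close> by (simp add: z_def Y_def)
  have inverse_z: "inverse z = s / Y" using \<open>s \<noteq> 0\<close> \<open>Y \<noteq> 0\<close> by (simp add: z_def Y_def field_simps)
  have exps: "exp Y * exp (-z) = exp (-(X/2 * (t/s)))"
  proof -
    have "Y + -z = -(X/2 * (t/s))" using \<open>s \<noteq> 0\<close> unfolding Y_def z_def s_def by (simp add: field_simps)
    thus ?thesis by (simp add: exp_add[symmetric])
  qed
  have prefactor: "(of_real ((x/2)^(2*l+1) * exp (x/2)) :: complex) = Y^(2*l+1) * exp Y"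
    by (simp add: Y_def X_def exp_of_real[symmetric])
  have K: "BesselK_tilde (of_nat l + 1/2) z
             = 2^l * of_real (sqrt pi) * (s/Y)^(l+1) * exp (-z) * (\<Sum>k\<le>l. coeff (bessel_poly l) k * (s/Y)^k)"
    unfolding BesselK_tilde_half_integer_sum[OF \<open>z \<noteq> 0\<close>] inverse_z ..
  have "G_gen \<mu> l t x = s powr (-(of_nat l + (\<mu>+3)/2)) * (Y^(2*l+1) * exp Y) * BesselI_tilde (\<mu>/2) (X/2 * (t/s))
          * (2^l * of_real (sqrt pi) * (s/Y)^(l+1) * exp (-z) * (\<Sum>k\<le>l. coeff (bessel_poly l) k * (s/Y)^k))"
  proof -
    have "G_gen \<mu> l t x = s powr (-(of_nat l + (\<mu>+3)/2)) * of_real ((x/2)^(2*l+1) * exp (x/2))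
       * BesselI_tilde (\<mu>/2) (t * X / (2 * s)) * BesselK_tilde (of_nat l + 1/2) z"
      by (simp add: G_gen_def X_def s_def z_def)
    moreover have "t * X / (2 * s) = X/2 * (t/s)" by simp
    ultimately show ?thesis unfolding prefactor K by simp
  qed
  also have "\<dots> = (\<Sum>k\<le>l. (2^l * of_real (sqrt pi) * coeff (bessel_poly l) k) *
       (s powr (-(of_nat l + (\<mu>+3)/2)) * Y^(2*l+1) * (s/Y)^(l+1) * (s/Y)^k) *
       ((exp Y * exp (-z)) * BesselI_tilde (\<mu>/2) (X/2 * (t/s))))"
    unfolding sum_distrib_left by (intro sum.cong refl) (simp only: mult_ac)
  also have "\<dots> = (\<Sum>k\<le>l. (2^l * of_real (sqrt pi) * coeff (bessel_poly l) k) *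
       (Y^(l-k) * s powr (of_nat k - (\<mu>+1)/2)) * (exp (-(X/2 * (t/s))) * BesselI_tilde (\<mu>/2) (X/2 * (t/s))))"
    by (intro sum.cong refl)
       (subst powr_power_regroup[OF \<open>s \<noteq> 0\<close> \<open>Y \<noteq> 0\<close>], simp, simp only: exps)
  also have "\<dots> = G_expanded \<mu> l X t"
    unfolding G_expanded_def G_coeff_def exp_neg_BesselI_subst_def Y_def[symmetric] s_def[symmetric]
    by (intro sum.cong refl) (simp add: mult_ac)
  finally show ?thesis by (simp add: X_def)
qed

definition G_fps :: "complex \<Rightarrow> nat \<Rightarrow> complex \<Rightarrow> complex fps" where
  "G_fps \<mu> l X = (\<Sum>k\<le>l. fps_const (G_coeff l X k)
                      * (one_minus_X_powr_fps (of_nat k - (\<mu>+1)/2) * exp_neg_BesselI_subst_fps (\<mu>/2) X))"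

lemma has_fps_expansion_G_gen:
  assumes "x > 0"
  shows "(\<lambda>t. G_gen \<mu> l t x) has_fps_expansion G_fps \<mu> l (of_real x)"
proof -
  have "G_expanded \<mu> l (of_real x) has_fps_expansion G_fps \<mu> l (of_real x)"
    unfolding G_expanded_def G_fps_def
    by (intro has_fps_expansion_sum has_fps_expansion_cmult_left has_fps_expansion_mult
              has_fps_expansion_one_minus_powr has_fps_expansion_exp_neg_BesselI_subst)
  moreover have "eventually (\<lambda>t. G_gen \<mu> l t x = G_expanded \<mu> l (of_real x) t) (nhds 0)"
    using eventually_in_unit_ball by eventually_elim (auto intro: G_gen_eq_G_expanded[OF assms])
  ultimately show ?thesis using has_fps_expansion_cong[of "\<lambda>t. G_gen \<mu> l t x"] by simp
qed

definition M_scale :: "complex \<Rightarrow> nat \<Rightarrow> complex" where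
  "M_scale \<mu> j = Gamma (of_nat j + \<mu> + 1) / (2 powr \<mu> * Gamma (of_nat j + (\<mu> + 1)/2))"

lemma M_poly_eq_G_fps_nth:
  assumes "x > 0"
  shows "M_poly \<mu> l j x = M_scale \<mu> j * (G_fps \<mu> l (of_real x) $ j)"
proof -
  have "G_fps \<mu> l (of_real x) $ j = (deriv ^^ j) (\<lambda>t. G_gen \<mu> l t x) 0 / fact j"
    by (rule fps_nth_fps_expansion[OF has_fps_expansion_G_gen[OF assms]])
  hence "(deriv ^^ j) (\<lambda>t. G_gen \<mu> l t x) 0 = fact j * G_fps \<mu> l (of_real x) $ j"
    by (simp add: field_simps)
  thus ?thesis unfolding M_poly_def M_scale_def by (simp add: field_simps)
qed

lemma G_fps_nth:
  "G_fps \<mu> l X $ j = (\<Sum>k\<le>l. G_coeff l X k * (\<Sum>i=0..j. one_minus_X_powr_fps (of_nat k - (\<mu>+1)/2) $ i *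
       (\<Sum>r=0..j-i. exp_neg_BesselI_fps (\<mu>/2) $ r * ((X/2)^r * (X_div_one_minus_X_fps^r $ (j-i))))))"
  unfolding G_fps_def fps_sum_nth fps_mult_left_const_nth
  unfolding fps_mult_nth exp_neg_BesselI_subst_fps_nth ..

text \<open>The term \<open>(k, i, r)\<close> of the \<open>j\<close>-th Taylor coefficient combines the \<open>k\<close>-th coefficient
  of \<open>y_l\<close>, the \<open>i\<close>-th coefficient of the binomial series and the \<open>r\<close>-th coefficient of
  \<open>e^(-v) Itilde_{mu/2}(v)\<close>; it has degree \<open>l-k+r\<close> in \<open>x\<close>.\<close>

definition M_term :: "complex \<Rightarrow> nat \<Rightarrow> nat \<Rightarrow> nat \<Rightarrow> nat \<Rightarrow> nat \<Rightarrow> complex" where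
  "M_term \<mu> l j k i r =
     M_scale \<mu> j * 2^l * of_real (sqrt pi) * coeff (bessel_poly l) k
       * (one_minus_X_powr_fps (of_nat k - (\<mu>+1)/2) $ i)
       * (exp_neg_BesselI_fps (\<mu>/2) $ r) * (X_div_one_minus_X_fps^r $ (j-i)) / 2^(l-k+r)"

definition M_polynomial :: "complex \<Rightarrow> nat \<Rightarrow> nat \<Rightarrow> complex poly" where
  "M_polynomial \<mu> l j = (\<Sum>k\<le>l. \<Sum>i=0..j. \<Sum>r=0..j-i. monom (M_term \<mu> l j k i r) (l-k+r))"

lemma poly_M_polynomial:
  assumes "x > 0"
  shows "M_poly \<mu> l j x = poly (M_polynomial \<mu> l j) (of_real x)"
proof -
  define X where "X = (of_real x :: complex)"
  have "poly (M_polynomial \<mu> l j) X = (\<Sum>k\<le>l. \<Sum>i=0..j. \<Sum>r=0..j-i. M_term \<mu> l j k i r * X^(l-k+r))"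
    by (simp add: M_polynomial_def poly_sum poly_monom)
  also have "\<dots> = (\<Sum>k\<le>l. \<Sum>i=0..j. \<Sum>r=0..j-i. M_scale \<mu> j * (G_coeff l X k
                     * (one_minus_X_powr_fps (of_nat k - (\<mu>+1)/2) $ i
                     * (exp_neg_BesselI_fps (\<mu>/2) $ r * ((X/2)^r * (X_div_one_minus_X_fps^r $ (j-i)))))))"
  proof (intro sum.cong refl)
    fix k i r
    have "X^(l-k+r) / 2^(l-k+r) = (X/2)^(l-k) * (X/2)^r" by (simp add: power_add power_divide)
    thus "M_term \<mu> l j k i r * X^(l-k+r) = M_scale \<mu> j * (G_coeff l X k
            * (one_minus_X_powr_fps (of_nat k - (\<mu>+1)/2) $ i
            * (exp_neg_BesselI_fps (\<mu>/2) $ r * ((X/2)^r * (X_div_one_minus_X_fps^r $ (j-i))))))"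
      unfolding M_term_def G_coeff_def by (simp add: field_simps)
  qed
  also have "\<dots> = M_scale \<mu> j * (G_fps \<mu> l X $ j)"
    unfolding G_fps_nth by (simp add: sum_distrib_left)
  finally show ?thesis using M_poly_eq_G_fps_nth[OF assms] by (simp add: X_def)
qed

lemma degree_M_polynomial_le: "degree (M_polynomial \<mu> l j) \<le> j + l"
  unfolding M_polynomial_def
  by (intro degree_sum_le finite_atLeastAtMost finite_atMost order.trans[OF degree_monom_le]) auto

lemma sum_eq_single:
  assumes "finite A" "a \<in> A" "\<And>x. x \<in> A \<Longrightarrow> x \<noteq> a \<Longrightarrow> g x = 0"
  shows "sum g A = g a"
  using sum.mono_neutral_right[of A "{a}" g] assms by auto

lemma sum_triple_single:
  fixes f :: "nat \<Rightarrow> nat \<Rightarrow> nat \<Rightarrow> 'a :: comm_monoid_add"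
  assumes "k0 \<le> l" "i0 \<le> j" "r0 \<le> j - i0"
    and "\<And>k i r. k \<le> l \<Longrightarrow> i \<le> j \<Longrightarrow> r \<le> j - i \<Longrightarrow> (k, i, r) \<noteq> (k0, i0, r0) \<Longrightarrow> f k i r = 0"
  shows "(\<Sum>k\<le>l. \<Sum>i=0..j. \<Sum>r=0..j-i. f k i r) = f k0 i0 r0"
proof -
  have "(\<Sum>k\<le>l. \<Sum>i=0..j. \<Sum>r=0..j-i. f k i r) = (\<Sum>i=0..j. \<Sum>r=0..j-i. f k0 i r)"
    using assms by (intro sum_eq_single sum.neutral ballI) auto
  also have "\<dots> = (\<Sum>r=0..j-i0. f k0 i0 r)"
    using assms by (intro sum_eq_single sum.neutral ballI) auto
  also have "\<dots> = f k0 i0 r0"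
    using assms by (intro sum_eq_single) auto
  finally show ?thesis .
qed

lemma coeff_M_polynomial:
  "coeff (M_polynomial \<mu> l j) d = (\<Sum>k\<le>l. \<Sum>i=0..j. \<Sum>r=0..j-i. if l-k+r = d then M_term \<mu> l j k i r else 0)"
  by (simp add: M_polynomial_def coeff_sum)

context admissible_mu
begin

lemma coeff_M_polynomial_top: "coeff (M_polynomial \<mu> l j) (j + l) = (-1)^j / fact j"
proof -
  have "coeff (M_polynomial \<mu> l j) (j + l) = (if l - 0 + j = j + l then M_term \<mu> l j 0 0 j else 0)"
    unfolding coeff_M_polynomial by (rule sum_triple_single) auto
  also have "\<dots> = M_term \<mu> l j 0 0 j" by simp
  also have "\<dots> = (-1)^j / fact j"
  proof -
    have "(-2::complex)^j = (-1)^j * 2^j" by (simp flip: power_mult_distrib)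
    moreover have "(2::complex)^(l+j) = 2^l * 2^j" by (simp add: power_add)
    moreover have "(2::complex) powr \<mu> \<noteq> 0" by (simp add: powr_def)
    ultimately show ?thesis
      unfolding M_term_def M_scale_def exp_neg_BesselI_fps_nth
      using Gamma_of_nat_plus_half_mu_neq_0[of j] Gamma_of_nat_plus_mu_plus_one_neq_0[of j]
      by (simp add: coeff_0_bessel_poly one_minus_X_powr_fps_def X_div_one_minus_X_fps_power_nth_self
                    field_simps)
  qed
  finally show ?thesis .
qed

lemma coeff_M_polynomial_0:
  "coeff (M_polynomial \<mu> l j) 0 =
     2 powr (2 * of_nat l - \<mu>) * Gamma (of_nat l + 1/2) * Gamma (of_nat j + \<mu> + 1)
       * pochhammer ((\<mu> + 1)/2 - of_nat l) j
     / (fact j * Gamma ((\<mu> + 2)/2) * Gamma (of_nat j + (\<mu> + 1)/2))"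
proof -
  have vanish: "(if l - k + r = 0 then M_term \<mu> l j k i r else 0) = 0"
    if "k \<le> l" "i \<le> j" "(k, i, r) \<noteq> (l, j, 0)" for k i r
  proof (cases "l - k + r = 0")
    case True
    with that have "r = 0" "j - i \<noteq> 0" by auto
    thus ?thesis by (simp add: M_term_def)
  qed auto
  have "coeff (M_polynomial \<mu> l j) 0 = (if l - l + 0 = 0 then M_term \<mu> l j l j 0 else 0)"
    unfolding coeff_M_polynomial by (rule sum_triple_single) (use vanish in auto)
  also have "\<dots> = M_term \<mu> l j l j 0" by simp
  also have "\<dots> = 2 powr (2 * of_nat l - \<mu>) * Gamma (of_nat l + 1/2) * Gamma (of_nat j + \<mu> + 1)
       * pochhammer ((\<mu> + 1)/2 - of_nat l) j
     / (fact j * Gamma ((\<mu> + 2)/2) * Gamma (of_nat j + (\<mu> + 1)/2))"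
  proof -
    have "2 powr (2 * of_nat l - \<mu>) * 2 powr \<mu> = (2::complex) powr (of_nat (2*l))"
      by (simp add: powr_add[symmetric])
    also have "\<dots> = 2^(2*l)" by (rule powr_complexpow) simp
    also have "\<dots> = 2^l * 2^l" by (rule two_power_double_complex)
    finally have two_powr: "2 powr (2 * of_nat l - \<mu>) = 2^l * 2^l / (2::complex) powr \<mu>"
      by (simp add: field_simps powr_def)
    have binomial: "one_minus_X_powr_fps (of_nat l - (\<mu>+1)/2) $ j = pochhammer ((\<mu> + 1)/2 - of_nat l) j / fact j"
      by (simp add: one_minus_X_powr_fps_def gbinomial_pochhammer)
    have "exp_neg_BesselI_fps (\<mu>/2) $ 0 = inverse (Gamma ((\<mu> + 2)/2))"
      by (simp add: exp_neg_BesselI_fps_nth_0 rGamma_inverse_Gamma add_divide_distrib)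
    hence "M_term \<mu> l j l j 0 = M_scale \<mu> j * 2^l * of_real (sqrt pi) * (2^l * Gamma (of_nat l + 1/2) / of_real (sqrt pi))
             * (pochhammer ((\<mu> + 1)/2 - of_nat l) j / fact j) * inverse (Gamma ((\<mu> + 2)/2))"
      unfolding M_term_def lead_coeff_bessel_poly binomial by simp
    thus ?thesis
      unfolding M_scale_def two_powr
      using Gamma_of_nat_plus_half_mu_neq_0[of j] by (simp add: field_simps powr_def)
  qed
  finally show ?thesis .
qed

end

theorem theorem2p1:
  fixes \<mu> :: complex and l j :: nat
  assumes "\<And>n::nat. \<mu> \<noteq> - of_nat (Suc n)"
  shows "\<exists>p :: complex poly.
           degree p = j + l
         \<and> coeff p (j + l) = (-1)^j / fact j
         \<and> coeff p 0 =
             2 powr (2 * of_nat l - \<mu>) * Gamma (of_nat l + 1/2) * Gamma (of_nat j + \<mu> + 1)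
               * pochhammer ((\<mu> + 1)/2 - of_nat l) j
             / (fact j * Gamma ((\<mu> + 2)/2) * Gamma (of_nat j + (\<mu> + 1)/2))
         \<and> (\<forall>x::real. x > 0 \<longrightarrow> M_poly \<mu> l j x = poly p (of_real x))"
proof -
  interpret admissible_mu \<mu> using assms by unfold_locales
  have "degree (M_polynomial \<mu> l j) = j + l"
    using degree_M_polynomial_le coeff_M_polynomial_top by (intro antisym le_degree) simp_all
  thus ?thesis using coeff_M_polynomial_top coeff_M_polynomial_0 poly_M_polynomial by blast
qed

end
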